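(* In the setting of the context (with assumptions (A.1)–(A.3)), suppose the PMM generates infinite sequences $\{(u_k,v_k)\}$, $\{(z_k,w_k)\}$, $\{\gamma_k\}$, $\{\rho_k\}$, and define $x_k=z_{k-1}+\lambda w_{k-1}+\lambda(Cv_k-d)$ and $y_k=x_k-\lambda(w_{k-1}-Mu_k)$. Let $d_0$ be the distance from $(z_0,w_0)$ to the set $S_e(\partial h_1,\partial h_2)$ and $\tau=\min\{\lambda,1/\lambda\}$. Then for all $k=1,2,\dots$, $$0\in\partial g(v_k)+C^*x_k,\qquad 0\in\partial f(u_k)+M^*y_k,$$ and there exists an index $1\le i\le k$ such that $$\|Mu_i+Cv_i-d\|\le\frac{2d_0}{(1-\bar\rho)\tau\sqrt k},\qquad \|x_i-y_i\|\le\frac{2d_0}{(1-\bar\rho)\tau\sqrt k}.$$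
   Context: Let $f:\mathbb{R}^{m_1}\to(-\infty,\infty]$, $g:\mathbb{R}^{m_2}\to(-\infty,\infty]$ be proper closed convex, $M:\mathbb{R}^{m_1}\to\mathbb{R}^n$, $C:\mathbb{R}^{m_2}\to\mathbb{R}^n$ linear, $d\in\mathbb{R}^n$; consider $\min\{f(u)+g(v):Mu+Cv=d\}$ with Lagrangian $L(u,v,z)=f(u)+g(v)+\langle Mu+Cv-d,z\rangle$. A saddle point is $(u^*,v^*,z^* )$ with $L(u^*,v^*,z^* )$ finite and $\min_{(u,v)}L(u,v,z^* )=L(u^*,v^*,z^* )=\max_zL(u^*,v^*,z)$. Let $h_1(z)=f^*(-M^*z)$, $h_2(z)=g^*(-C^*z)+\langle d,z\rangle$ ($^*$ on functions = Fenchel conjugate, on operators = adjoint), and $S_e(\partial h_1,\partial h_2)=\{(z,w)\in\mathbb{R}^n\times\mathbb{R}^n:-w\in\partial h_1(z),\ w\in\partial h_2(z)\}$ (a closed convex set). Standing assumptions: (A.1) $L$ has a saddle point; (A.2) $\mathrm{ri}(\mathrm{dom} f^* )\cap\mathrm{range}(M^* )\ne\emptyset$; (A.3) $\mathrm{ri}(\mathrm{dom} g^* )\cap\mathrm{range}(C^* )\ne\emptyset$. PMM: given $(z_0,w_0)\in\mathbb{R}^n\times\mathbb{R}^n$, $\lambda>0$, $\bar\rho\in[0,1)$, for $k=1,2,\dots$: (1) let $v_k$ be a minimizer of $g(v)+\langle z_{k-1}+\lambda w_{k-1},Cv-d\rangle+\frac\lambda2\|Cv-d\|^2$ and $u_k$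 a minimizer of $f(u)+\langle z_{k-1}+\lambda(Cv_k-d),Mu\rangle+\frac\lambda2\|Mu\|^2$; (2) if $\|Mu_k+Cv_k-d\|+\|Mu_k-w_{k-1}\|=0$ stop; otherwise set $\gamma_k=\dfrac{\lambda\|Cv_k-d+w_{k-1}\|^2+\lambda\langle d-Cv_k-Mu_k,w_{k-1}-Mu_k\rangle}{\|Mu_k+Cv_k-d\|^2+\lambda^2\|Mu_k-w_{k-1}\|^2}$; (3) choose $\rho_k\in[1-\bar\rho,1+\bar\rho]$ and set $z_k=z_{k-1}+\rho_k\gamma_k(Mu_k+Cv_k-d)$, $w_k=w_{k-1}-\rho_k\gamma_k\lambda(w_{k-1}-Mu_k)$. *)

theory Defs
  imports "HOL-Analysis.Analysis"
begin

definition proper_fun :: "('a::euclidean_space \<Rightarrow> ereal) \<Rightarrow> bool" where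
  "proper_fun f \<longleftrightarrow> (\<forall>x. f x \<noteq> -\<infinity>) \<and> (\<exists>x. f x \<noteq> \<infinity>)"

definition epigraph :: "('a::euclidean_space \<Rightarrow> ereal) \<Rightarrow> ('a \<times> real) set" where
  "epigraph f = {(x, t). f x \<le> ereal t}"

definition convex_fun :: "('a::euclidean_space \<Rightarrow> ereal) \<Rightarrow> bool" where
  "convex_fun f \<longleftrightarrow> convex (epigraph f)"

definition closed_fun :: "('a::euclidean_space \<Rightarrow> ereal) \<Rightarrow> bool" where
  "closed_fun f \<longleftrightarrow> closed (epigraph f)"

definition proper_closed_convex :: "('a::euclidean_space \<Rightarrow> ereal) \<Rightarrow> bool" where
  "proper_closed_convex f \<longleftrightarrow> proper_fun f \<and> closed_fun f \<and> convex_fun f"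

definition effdom :: "('a::euclidean_space \<Rightarrow> ereal) \<Rightarrow> 'a set" where
  "effdom f = {x. f x < \<infinity>}"

definition fconj :: "('a::euclidean_space \<Rightarrow> ereal) \<Rightarrow> 'a \<Rightarrow> ereal" where
  "fconj f y = (SUP x. ereal (y \<bullet> x) - f x)"

definition subdiff :: "('a::euclidean_space \<Rightarrow> ereal) \<Rightarrow> 'a \<Rightarrow> 'a set" where
  "subdiff f x = {s. \<bar>f x\<bar> \<noteq> \<infinity> \<and> (\<forall>y. f y \<ge> f x + ereal (s \<bullet> (y - x)))}"

definition lagr :: "('a::euclidean_space \<Rightarrow> ereal) \<Rightarrow> ('b::euclidean_space \<Rightarrow> ereal)
    \<Rightarrow> ('a \<Rightarrow> 'c::euclidean_space) \<Rightarrow> ('b \<Rightarrow> 'c) \<Rightarrow> 'c \<Rightarrow> 'a \<Rightarrow> 'b \<Rightarrow> 'c \<Rightarrow> ereal" where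
  "lagr f g M C d u v z = f u + g v + ereal ((M u + C v - d) \<bullet> z)"

definition saddle_point :: "('a::euclidean_space \<Rightarrow> ereal) \<Rightarrow> ('b::euclidean_space \<Rightarrow> ereal)
    \<Rightarrow> ('a \<Rightarrow> 'c::euclidean_space) \<Rightarrow> ('b \<Rightarrow> 'c) \<Rightarrow> 'c \<Rightarrow> 'a \<Rightarrow> 'b \<Rightarrow> 'c \<Rightarrow> bool" where
  "saddle_point f g M C d u' v' z' \<longleftrightarrow>
     \<bar>lagr f g M C d u' v' z'\<bar> \<noteq> \<infinity> \<and>
     (\<forall>u v. lagr f g M C d u' v' z' \<le> lagr f g M C d u v z') \<and>
     (\<forall>z. lagr f g M C d u' v' z \<le> lagr f g M C d u' v' z')"

definition h1fun :: "('a::euclidean_space \<Rightarrow> ereal) \<Rightarrow> ('a \<Rightarrow> 'c::euclidean_space) \<Rightarrow> 'c \<Rightarrow> ereal" where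
  "h1fun f M z = fconj f (- adjoint M z)"

definition h2fun :: "('b::euclidean_space \<Rightarrow> ereal) \<Rightarrow> ('b \<Rightarrow> 'c::euclidean_space) \<Rightarrow> 'c \<Rightarrow> 'c \<Rightarrow> ereal" where
  "h2fun g C d z = fconj g (- adjoint C z) + ereal (d \<bullet> z)"

definition Se :: "('c::euclidean_space \<Rightarrow> ereal) \<Rightarrow> ('c \<Rightarrow> ereal) \<Rightarrow> ('c \<times> 'c) set" where
  "Se h1 h2 = {(z, w). - w \<in> subdiff h1 z \<and> w \<in> subdiff h2 z}"

end

theory Submission
  imports Defs
begin

text \<open>
  The optimality conditions of the two subproblems say \<open>- C\<^sup>* (x k) \<in> \<partial>g (v k)\<close> and
  \<open>- M\<^sup>* (y k) \<in> \<partial>f (u k)\<close>; by Fenchel--Young they become \<open>d - C (v k) \<in> \<partial>h\<^sub>2 (x k)\<close>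
  and \<open>- M (u k) \<in> \<partial>h\<^sub>1 (y k)\<close>. Adding the monotonicity inequalities of \<open>\<partial>h\<^sub>1\<close> and
  \<open>\<partial>h\<^sub>2\<close> against a point of \<open>S\<^sub>e\<close> shows that \<open>(z k, w k)\<close> is a relaxed projection step
  towards \<open>S\<^sub>e\<close>: with \<open>G k = \<parallel>M (u k) + C (v k) - d\<parallel>\<^sup>2 + lam\<^sup>2 \<parallel>M (u k) - w (k - 1)\<parallel>\<^sup>2\<close>,
  the squared distance to every point of \<open>S\<^sub>e\<close> drops by
  \<open>rho k (2 - rho k) (gam k)\<^sup>2 G k \<ge> ((1 - rhobar) tau / 2)\<^sup>2 G k\<close>, because \<open>gam k \<ge> tau / 2\<close>.
  Telescoping from \<open>(z 0, w 0)\<close> bounds \<open>k min\<^sub>i\<^sub>\<le>\<^sub>k G i\<close> by \<open>(2 d0 / ((1 - rhobar) tau))\<^sup>2\<close>,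
  and both residuals are at most \<open>sqrt (G i)\<close>.
  Only properness and convexity of \<open>f\<close>, \<open>g\<close> and the saddle point (A.1) are used.
\<close>

lemma subdiffI:
  assumes "h x = ereal c" and "\<And>y. ereal (c + s \<bullet> (y - x)) \<le> h y"
  shows "s \<in> subdiff h x"
  using assms unfolding subdiff_def by auto

lemma subdiffE:
  assumes "s \<in> subdiff h x"
  obtains c where "h x = ereal c" and "\<And>y. ereal (c + s \<bullet> (y - x)) \<le> h y"
proof -
  from assms obtain c where "h x = ereal c" unfolding subdiff_def by (cases "h x") auto
  with assms show thesis unfolding subdiff_def by (intro that) auto
qed

lemma subdiff_monotone:
  assumes "s \<in> subdiff h x" and "t \<in> subdiff h y"
  shows "0 \<le> (s - t) \<bullet> (x - y)"
proof -
  from assms(1) obtain a where a: "h x = ereal a" "\<And>z. ereal (a + s \<bullet> (z - x)) \<le> h z"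
    by (rule subdiffE) blast
  from assms(2) obtain b where b: "h y = ereal b" "\<And>z. ereal (b + t \<bullet> (z - y)) \<le> h z"
    by (rule subdiffE) blast
  have "a + s \<bullet> (y - x) \<le> b" "b + t \<bullet> (x - y) \<le> a"
    using a(2)[of y] b(2)[of x] a(1) b(1) by simp_all
  then show ?thesis by (simp add: inner_diff_left inner_diff_right inner_commute algebra_simps)
qed

lemma fenchel_young: "ereal (s \<bullet> u) - f u \<le> fconj f s"
  unfolding fconj_def by (rule SUP_upper) simp

lemma fconj_eq_of_subdiff:
  assumes "s \<in> subdiff f u"
  shows "fconj f s = ereal (s \<bullet> u) - f u"
proof (rule antisym)
  from assms obtain c where fc: "f u = ereal c" and sub: "\<And>y. ereal (c + s \<bullet> (y - u)) \<le> f y"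
    by (rule subdiffE) blast
  show "fconj f s \<le> ereal (s \<bullet> u) - f u"
    unfolding fconj_def
  proof (rule SUP_least)
    fix x
    show "ereal (s \<bullet> x) - f x \<le> ereal (s \<bullet> u) - f u"
      using sub[of x] unfolding fc by (cases "f x") (auto simp: inner_diff_right)
  qed
qed (rule fenchel_young)

lemma subdiff_fconj_neg_adjoint:
  fixes L :: "'a::euclidean_space \<Rightarrow> 'c::euclidean_space"
  assumes L: "linear L" and s: "- adjoint L y \<in> subdiff f u"
  shows "- L u \<in> subdiff (\<lambda>z. fconj f (- adjoint L z)) y"
proof -
  from s obtain c where fc: "f u = ereal c" by (rule subdiffE) blast
  have adj: "(- adjoint L z) \<bullet> u = - (L u \<bullet> z)" for z
    using adjoint_works[OF L] by (simp add: inner_commute)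
  show ?thesis
  proof (rule subdiffI)
    show "fconj f (- adjoint L y) = ereal (- (L u \<bullet> y) - c)"
      using fconj_eq_of_subdiff[OF s] fc adj by simp
    fix z
    have eq: "- (L u \<bullet> y) - c + (- L u) \<bullet> (z - y) = (- adjoint L z) \<bullet> u - c"
      using adj[of z] by (simp add: inner_diff_right)
    have "ereal ((- adjoint L z) \<bullet> u - c) \<le> fconj f (- adjoint L z)"
      using fenchel_young[of "- adjoint L z" u f] fc by simp
    then show "ereal (- (L u \<bullet> y) - c + (- L u) \<bullet> (z - y)) \<le> fconj f (- adjoint L z)"
      unfolding eq .
  qed
qed

lemma subdiff_add_inner:
  assumes "p \<in> subdiff h y"
  shows "p + a \<in> subdiff (\<lambda>z. h z + ereal (a \<bullet> z)) y"
proof -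
  from assms obtain c where c: "h y = ereal c" "\<And>z. ereal (c + p \<bullet> (z - y)) \<le> h z"
    by (rule subdiffE) blast
  show ?thesis
  proof (rule subdiffI)
    show "h y + ereal (a \<bullet> y) = ereal (c + a \<bullet> y)" using c by simp
    fix z
    have "ereal (c + p \<bullet> (z - y)) + ereal (a \<bullet> z) \<le> h z + ereal (a \<bullet> z)"
      using c(2) by (rule add_right_mono)
    then show "ereal (c + a \<bullet> y + (p + a) \<bullet> (z - y)) \<le> h z + ereal (a \<bullet> z)"
      by (simp add: inner_diff_right inner_add_left algebra_simps)
  qed
qed

lemma subdiff_h1fun:
  assumes "linear M" and "- adjoint M y \<in> subdiff f u"
  shows "- M u \<in> subdiff (h1fun f M) y"
  unfolding h1fun_def[abs_def] using assms by (rule subdiff_fconj_neg_adjoint)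

lemma subdiff_h2fun:
  assumes "linear C" and "- adjoint C x \<in> subdiff g v"
  shows "d - C v \<in> subdiff (h2fun g C d) x"
  using subdiff_add_inner[OF subdiff_fconj_neg_adjoint[OF assms], of d]
  unfolding h2fun_def[abs_def] by (simp add: inner_commute)

lemma convex_fun_segment_le:
  assumes "convex_fun g" and "g x = ereal a" and "g y = ereal b" and "0 \<le> t" and "t \<le> 1"
  shows "g (x + t *\<^sub>R (y - x)) \<le> ereal ((1 - t) * a + t * b)"
proof -
  have "(x, a) \<in> epigraph g" "(y, b) \<in> epigraph g" using assms(2,3) unfolding epigraph_def by auto
  then have "(1 - t) *\<^sub>R (x, a) + t *\<^sub>R (y, b) \<in> epigraph g"
    using assms(1,4,5) unfolding convex_fun_def by (intro convexD) auto
  moreover have "(1 - t) *\<^sub>R (x, a) + t *\<^sub>R (y, b) = (x + t *\<^sub>R (y - x), (1 - t) * a + t * b)"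
    by (simp add: algebra_simps)
  ultimately show ?thesis unfolding epigraph_def by simp
qed

lemma le_of_le_add_small_multiple:
  fixes a b B :: real
  assumes "\<And>t. 0 < t \<Longrightarrow> t < 1 \<Longrightarrow> a \<le> b + t * B"
  shows "a \<le> b"
proof (rule field_le_epsilon)
  fix e :: real assume e: "0 < e"
  define t where "t = min (1/2) (e / (\<bar>B\<bar> + 1))"
  have t: "0 < t" "t < 1" using e unfolding t_def by auto
  have "t * \<bar>B\<bar> \<le> e / (\<bar>B\<bar> + 1) * (\<bar>B\<bar> + 1)"
    using e unfolding t_def by (intro mult_mono) auto
  then have "t * B \<le> e" using e t by (smt (verit) abs_ge_self mult_left_mono nonzero_eq_divide_eq)
  then show "a \<le> b + e" using assms[OF t] by simp
qed

text \<open>Convexity of \<open>g\<close> along the segment from \<open>v0\<close> to \<open>y\<close> gives the subgradient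
  inequality up to an error \<open>t B y\<close>, which vanishes as \<open>t \<rightarrow> 0\<close>.\<close>

lemma subdiff_at_min_add_smooth:
  fixes g :: "'b::euclidean_space \<Rightarrow> ereal" and q :: "'b \<Rightarrow> real"
  assumes proper: "proper_fun g" and convex: "convex_fun g"
    and min: "\<And>v. g v0 + ereal (q v0) \<le> g v + ereal (q v)"
    and expand: "\<And>v t. q (v0 + t *\<^sub>R (v - v0)) = q v0 + t * (c \<bullet> (v - v0)) + t\<^sup>2 * B v"
  shows "- c \<in> subdiff g v0"
proof -
  from proper obtain v1 where "g v1 \<noteq> \<infinity>" and not_minf: "\<And>v. g v \<noteq> -\<infinity>"
    unfolding proper_fun_def by auto
  then have "g v0 + ereal (q v0) \<noteq> \<infinity>"
    using min[of v1] by (cases "g v1") auto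
  then obtain a where a: "g v0 = ereal a" using not_minf[of v0] by (cases "g v0") auto
  show ?thesis
  proof (rule subdiffI[of g v0 a, OF a])
    fix y
    show "ereal (a + (- c) \<bullet> (y - v0)) \<le> g y"
    proof (cases "g y")
      case (real b)
      have "a \<le> b + c \<bullet> (y - v0)"
      proof (rule le_of_le_add_small_multiple)
        fix t :: real assume t: "0 < t" "t < 1"
        let ?v = "v0 + t *\<^sub>R (y - v0)"
        have "ereal (a + q v0) \<le> g ?v + ereal (q ?v)"
          using min[of ?v] a by simp
        also have "\<dots> \<le> ereal ((1 - t) * a + t * b) + ereal (q ?v)"
          using convex_fun_segment_le[OF convex a real] t by (intro add_right_mono) auto
        finally have "a + q v0 \<le> (1 - t) * a + t * b + q ?v" by simp
        then have "t * a \<le> t * (b + c \<bullet> (y - v0) + t * B y)"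
          unfolding expand by (simp add: algebra_simps power2_eq_square)
        then show "a \<le> b + c \<bullet> (y - v0) + t * B y" using t by simp
      qed
      then show ?thesis using real by (simp add: inner_diff_right)
    qed (use not_minf in auto)
  qed
qed

lemma inner_norm_sq_expansion:
  fixes A a h :: "'c::real_inner"
  shows "A \<bullet> (a + t *\<^sub>R h) + lam / 2 * (norm (a + t *\<^sub>R h))\<^sup>2
       = A \<bullet> a + lam / 2 * (norm a)\<^sup>2 + t * (h \<bullet> (A + lam *\<^sub>R a)) + t\<^sup>2 * (lam / 2 * (norm h)\<^sup>2)"
  unfolding power2_norm_eq_inner
  by (simp add: inner_add_left inner_add_right inner_commute algebra_simps power2_eq_square)

lemma subdiff_at_argmin_augmented:
  fixes g :: "'b::euclidean_space \<Rightarrow> ereal" and L :: "'b \<Rightarrow> 'c::euclidean_space"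
  assumes "proper_fun g" and "convex_fun g" and L: "linear L"
    and "\<And>v. g v0 + ereal (A \<bullet> (L v0 - e) + lam / 2 * (norm (L v0 - e))\<^sup>2)
            \<le> g v + ereal (A \<bullet> (L v - e) + lam / 2 * (norm (L v - e))\<^sup>2)"
  shows "- adjoint L (A + lam *\<^sub>R (L v0 - e)) \<in> subdiff g v0"
proof (rule subdiff_at_min_add_smooth[OF assms(1,2,4)])
  fix v and t :: real
  have "L (v0 + t *\<^sub>R (v - v0)) - e = (L v0 - e) + t *\<^sub>R L (v - v0)"
    by (simp add: linear_add[OF L] linear_scale[OF L])
  moreover have "adjoint L (A + lam *\<^sub>R (L v0 - e)) \<bullet> (v - v0) = L (v - v0) \<bullet> (A + lam *\<^sub>R (L v0 - e))"
    by (simp add: adjoint_works[OF L] inner_commute)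
  ultimately show "A \<bullet> (L (v0 + t *\<^sub>R (v - v0)) - e) + lam / 2 * (norm (L (v0 + t *\<^sub>R (v - v0)) - e))\<^sup>2
      = A \<bullet> (L v0 - e) + lam / 2 * (norm (L v0 - e))\<^sup>2
        + t * (adjoint L (A + lam *\<^sub>R (L v0 - e)) \<bullet> (v - v0)) + t\<^sup>2 * (lam / 2 * (norm (L (v - v0)))\<^sup>2)"
    by (simp only: inner_norm_sq_expansion)
qed

lemma subdiff_at_argmin_add_linear:
  fixes L :: "'a::euclidean_space \<Rightarrow> 'c::euclidean_space"
  assumes L: "linear L" and fin: "f u0 = ereal c"
    and min: "\<And>u. ereal (c + L u0 \<bullet> z) \<le> f u + ereal (L u \<bullet> z)"
  shows "- adjoint L z \<in> subdiff f u0"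
proof (rule subdiffI[of f u0 c, OF fin])
  fix u
  have "(- adjoint L z) \<bullet> (u - u0) = L u0 \<bullet> z - L u \<bullet> z"
    using adjoint_works[OF L] by (simp add: inner_diff_right inner_commute linear_diff[OF L])
  then show "ereal (c + (- adjoint L z) \<bullet> (u - u0)) \<le> f u"
    using min[of u] by (cases "f u") auto
qed

lemma saddle_point_in_Se:
  fixes f :: "'a::euclidean_space \<Rightarrow> ereal" and g :: "'b::euclidean_space \<Rightarrow> ereal"
    and M :: "'a \<Rightarrow> 'c::euclidean_space" and C :: "'b \<Rightarrow> 'c"
  assumes "proper_fun f" and "proper_fun g" and M: "linear M" and C: "linear C"
    and saddle: "saddle_point f g M C d u' v' z'"
  shows "(z', M u') \<in> Se (h1fun f M) (h2fun g C d)"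
proof -
  from saddle have fin: "\<bar>f u' + g v' + ereal ((M u' + C v' - d) \<bullet> z')\<bar> \<noteq> \<infinity>"
    and min: "\<And>u v. f u' + g v' + ereal ((M u' + C v' - d) \<bullet> z') \<le> f u + g v + ereal ((M u + C v - d) \<bullet> z')"
    and max: "\<And>z. f u' + g v' + ereal ((M u' + C v' - d) \<bullet> z) \<le> f u' + g v' + ereal ((M u' + C v' - d) \<bullet> z')"
    unfolding saddle_point_def lagr_def by auto
  from assms(1,2) have "f u' \<noteq> -\<infinity>" "g v' \<noteq> -\<infinity>" unfolding proper_fun_def by auto
  with fin obtain a b where a: "f u' = ereal a" and b: "g v' = ereal b"
    by (cases "f u'"; cases "g v'") auto
  define r where "r = M u' + C v' - d"
  have "r \<bullet> (z' + r) \<le> r \<bullet> z'"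
    using max[of "z' + r"] a b unfolding r_def by simp
  then have "r \<bullet> r \<le> 0" by (simp add: inner_add_right)
  then have "r = 0" by (metis inner_eq_zero_iff inner_ge_zero order_antisym)
  then have feasible: "C v' - d = - M u'" unfolding r_def by (simp add: algebra_simps)
  have "- adjoint M z' \<in> subdiff f u'"
  proof (rule subdiff_at_argmin_add_linear[OF M], fact a)
    fix u
    show "ereal (a + M u' \<bullet> z') \<le> f u + ereal (M u \<bullet> z')"
      using min[of u v'] a b feasible by (cases "f u") (auto simp: algebra_simps inner_diff_left)
  qed
  moreover have "- adjoint C z' \<in> subdiff g v'"
  proof (rule subdiff_at_argmin_add_linear[OF C], fact b)
    fix v
    have "C v - d = (C v - C v') - M u'" using feasible by (simp add: algebra_simps)
    then show "ereal (b + C v' \<bullet> z') \<le> g v + ereal (C v \<bullet> z')"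
      using min[of u' v] a b feasible by (cases "g v") (auto simp: algebra_simps inner_diff_left)
  qed
  ultimately have "- M u' \<in> subdiff (h1fun f M) z'" and "d - C v' \<in> subdiff (h2fun g C d) z'"
    by (auto intro: subdiff_h1fun[OF M] subdiff_h2fun[OF C])
  moreover have "d - C v' = M u'" using feasible by (simp add: algebra_simps)
  ultimately show ?thesis unfolding Se_def by simp
qed

text \<open>The left-hand side is the sum of the monotonicity inequalities of \<open>\<partial>h\<^sub>1\<close> at
  \<open>y = x - \<lambda>(W - U)\<close> and of \<open>\<partial>h\<^sub>2\<close> at \<open>x = Z + \<lambda>W + \<lambda>V\<close>.\<close>

lemma pmm_monotonicity_identity:
  fixes Z W U V zs ws :: "'c::real_inner"
  shows "(U - ws) \<bullet> (zs - (Z + lam *\<^sub>R W + lam *\<^sub>R V - lam *\<^sub>R (W - U)))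
        + (ws + V) \<bullet> (zs - (Z + lam *\<^sub>R W + lam *\<^sub>R V))
      = - lam * ((norm (V + W))\<^sup>2 - (U + V) \<bullet> (W - U))
        - (Z - zs) \<bullet> (U + V) + lam * ((W - ws) \<bullet> (W - U))"
  by (simp add: power2_norm_eq_inner inner_diff_left inner_diff_right inner_add_left inner_add_right
      inner_commute algebra_simps)

lemma norm_sq_update_expansion:
  fixes P Q r b :: "'c::real_inner"
  shows "(norm (P + s *\<^sub>R r))\<^sup>2 + (norm (Q - (s * lam) *\<^sub>R b))\<^sup>2
     = (norm P)\<^sup>2 + (norm Q)\<^sup>2 + 2 * s * (P \<bullet> r - lam * (Q \<bullet> b))
       + s\<^sup>2 * ((norm r)\<^sup>2 + lam\<^sup>2 * (norm b)\<^sup>2)"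
  unfolding power2_norm_eq_inner
  by (simp add: inner_diff_left inner_diff_right inner_add_left inner_add_right
      inner_commute algebra_simps power2_eq_square)

lemma norm_diff_sq_add_norm_sq_le:
  fixes a b :: "'c::real_inner"
  shows "(norm (a - b))\<^sup>2 + (norm b)\<^sup>2 \<le> 2 * ((norm a)\<^sup>2 - (a - b) \<bullet> b)"
proof -
  have "2 * ((norm a)\<^sup>2 - (a - b) \<bullet> b) - ((norm (a - b))\<^sup>2 + (norm b)\<^sup>2) = (norm a)\<^sup>2"
    by (simp add: power2_norm_eq_inner inner_diff_left inner_diff_right inner_commute algebra_simps)
  then show ?thesis by (smt (verit) zero_le_power2)
qed

lemma min_inverse_weighted_sum_le:
  fixes R B N lam :: real
  assumes lam: "0 < lam" and "0 \<le> R" "0 \<le> B" and le: "R + B \<le> 2 * N"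
  shows "min lam (1 / lam) / 2 * (R + lam\<^sup>2 * B) \<le> lam * N"
proof (cases "lam \<le> 1")
  case True
  then have "lam * lam \<le> 1" using lam by (simp add: mult_le_one)
  then have "min lam (1 / lam) = lam" using lam by (simp add: le_divide_eq)
  moreover have "lam\<^sup>2 * B \<le> B"
    using \<open>lam * lam \<le> 1\<close> assms(3) by (simp add: power2_eq_square mult_left_le_one_le)
  then have "lam * (R + lam\<^sup>2 * B) \<le> lam * (2 * N)"
    using lam le by (intro mult_left_mono) auto
  ultimately show ?thesis by simp
next
  case False
  then have "1 < lam\<^sup>2" by (simp add: power2_eq_square less_1_mult)
  then have min: "min lam (1 / lam) = 1 / lam" using lam by (simp add: divide_le_eq power2_eq_square)
  have "R \<le> lam\<^sup>2 * R"
    using mult_right_mono[of 1 "lam\<^sup>2" R] \<open>1 < lam\<^sup>2\<close> assms(2) by simp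
  then have "R + lam\<^sup>2 * B \<le> lam\<^sup>2 * (R + B)" by (simp add: distrib_left)
  then have "R + lam\<^sup>2 * B \<le> lam\<^sup>2 * (2 * N)"
    using le by (smt (verit) mult_left_mono zero_le_power2)
  then have "1 / lam / 2 * (R + lam\<^sup>2 * B) \<le> 1 / lam / 2 * (lam\<^sup>2 * (2 * N))"
    using lam by (intro mult_left_mono) auto
  also have "\<dots> = lam * N" using lam by (simp add: power2_eq_square)
  finally show ?thesis unfolding min .
qed

lemma pmm_stepsize_ge:
  fixes U V W :: "'c::real_inner"
  assumes lam: "0 < lam" and G: "0 < (norm (U + V))\<^sup>2 + lam\<^sup>2 * (norm (W - U))\<^sup>2"
  shows "min lam (1 / lam) / 2
      \<le> lam * ((norm (V + W))\<^sup>2 - (U + V) \<bullet> (W - U)) / ((norm (U + V))\<^sup>2 + lam\<^sup>2 * (norm (W - U))\<^sup>2)"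
proof -
  have "(norm ((V + W) - (W - U)))\<^sup>2 + (norm (W - U))\<^sup>2 \<le> 2 * ((norm (V + W))\<^sup>2 - ((V + W) - (W - U)) \<bullet> (W - U))"
    by (rule norm_diff_sq_add_norm_sq_le)
  moreover have "(V + W) - (W - U) = U + V" by (simp add: algebra_simps)
  ultimately have "(norm (U + V))\<^sup>2 + (norm (W - U))\<^sup>2 \<le> 2 * ((norm (V + W))\<^sup>2 - (U + V) \<bullet> (W - U))"
    by simp
  then have "min lam (1 / lam) / 2 * ((norm (U + V))\<^sup>2 + lam\<^sup>2 * (norm (W - U))\<^sup>2)
      \<le> lam * ((norm (V + W))\<^sup>2 - (U + V) \<bullet> (W - U))"
    by (intro min_inverse_weighted_sum_le[OF lam]) auto
  then show ?thesis using G by (simp add: pos_le_divide_eq)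
qed

lemma pmm_descent:
  fixes Z W U V zs ws :: "'c::real_inner" and lam rho gam :: real
  defines "G \<equiv> (norm (U + V))\<^sup>2 + lam\<^sup>2 * (norm (W - U))\<^sup>2"
  assumes "0 \<le> rho" and "0 \<le> gam" and gam: "gam * G = lam * ((norm (V + W))\<^sup>2 - (U + V) \<bullet> (W - U))"
    and mono: "0 \<le> (U - ws) \<bullet> (zs - (Z + lam *\<^sub>R W + lam *\<^sub>R V - lam *\<^sub>R (W - U)))
        + (ws + V) \<bullet> (zs - (Z + lam *\<^sub>R W + lam *\<^sub>R V))"
  shows "(norm (Z + (rho * gam) *\<^sub>R (U + V) - zs))\<^sup>2 + (norm (W - (rho * gam * lam) *\<^sub>R (W - U) - ws))\<^sup>2
      \<le> (norm (Z - zs))\<^sup>2 + (norm (W - ws))\<^sup>2 - rho * (2 - rho) * gam\<^sup>2 * G"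
proof -
  define s where "s = rho * gam"
  have "0 \<le> s" unfolding s_def using assms(2,3) by simp
  have angle: "(Z - zs) \<bullet> (U + V) - lam * ((W - ws) \<bullet> (W - U)) \<le> - (gam * G)"
    using mono unfolding pmm_monotonicity_identity gam by simp
  have "Z + (rho * gam) *\<^sub>R (U + V) - zs = (Z - zs) + s *\<^sub>R (U + V)"
    and "W - (rho * gam * lam) *\<^sub>R (W - U) - ws = (W - ws) - (s * lam) *\<^sub>R (W - U)"
    unfolding s_def by (simp_all add: algebra_simps)
  then have "(norm (Z + (rho * gam) *\<^sub>R (U + V) - zs))\<^sup>2 + (norm (W - (rho * gam * lam) *\<^sub>R (W - U) - ws))\<^sup>2
     = (norm (Z - zs))\<^sup>2 + (norm (W - ws))\<^sup>2 + 2 * s * ((Z - zs) \<bullet> (U + V) - lam * ((W - ws) \<bullet> (W - U)))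
       + s\<^sup>2 * G"
    unfolding G_def by (simp only: norm_sq_update_expansion)
  also have "\<dots> \<le> (norm (Z - zs))\<^sup>2 + (norm (W - ws))\<^sup>2 + 2 * s * (- (gam * G)) + s\<^sup>2 * G"
    using mult_left_mono[OF angle, of "2 * s"] \<open>0 \<le> s\<close> by linarith
  also have "\<dots> = (norm (Z - zs))\<^sup>2 + (norm (W - ws))\<^sup>2 - rho * (2 - rho) * gam\<^sup>2 * G"
    unfolding s_def by (simp add: algebra_simps power2_eq_square)
  finally show ?thesis .
qed

lemma Se_subdiff_monotone:
  assumes "(zs, ws) \<in> Se h1 h2" and "- U \<in> subdiff h1 Y" and "T \<in> subdiff h2 X"
  shows "0 \<le> (U - ws) \<bullet> (zs - Y) + (ws - T) \<bullet> (zs - X)"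
proof -
  from assms(1) have h1: "- ws \<in> subdiff h1 zs" and h2: "ws \<in> subdiff h2 zs" unfolding Se_def by auto
  have "0 \<le> (U - ws) \<bullet> (zs - Y)" using subdiff_monotone[OF h1 assms(2)] by simp
  moreover have "0 \<le> (ws - T) \<bullet> (zs - X)" using subdiff_monotone[OF h2 assms(3)] .
  ultimately show ?thesis by simp
qed

lemma relaxation_factor_ge:
  fixes rho rhobar :: real
  assumes "0 \<le> rhobar" and "rhobar \<le> 1" and "1 - rhobar \<le> rho \<and> rho \<le> 1 + rhobar"
  shows "(1 - rhobar)\<^sup>2 \<le> rho * (2 - rho)"
proof -
  have "(1 - rho)\<^sup>2 \<le> rhobar\<^sup>2" using assms by (intro power2_le_iff_abs_le[THEN iffD2]) auto
  moreover have "rhobar\<^sup>2 \<le> rhobar" using assms(1,2) by (simp add: power2_eq_square mult_left_le_one_le)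
  ultimately show ?thesis by (simp add: power2_eq_square algebra_simps)
qed

lemma pmm_step_fejer:
  fixes Z W U B d :: "'c::euclidean_space" and lam rho rhobar gam :: real
  defines "X \<equiv> Z + lam *\<^sub>R W + lam *\<^sub>R (B - d)"
    and "G \<equiv> (norm (U + B - d))\<^sup>2 + lam\<^sup>2 * (norm (U - W))\<^sup>2"
  assumes lam: "0 < lam" and rhobar: "0 \<le> rhobar" "rhobar < 1"
    and rho: "1 - rhobar \<le> rho \<and> rho \<le> 1 + rhobar"
    and solution: "p \<in> Se h1 h2"
    and sub1: "- U \<in> subdiff h1 (X - lam *\<^sub>R (W - U))" and sub2: "d - B \<in> subdiff h2 X"
    and no_stop: "norm (U + B - d) + norm (U - W) \<noteq> 0"
    and gam: "gam = (lam * (norm (B - d + W))\<^sup>2 + lam * ((d - B - U) \<bullet> (W - U))) / G"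
  shows "(dist (Z + (rho * gam) *\<^sub>R (U + B - d), W - (rho * gam * lam) *\<^sub>R (W - U)) p)\<^sup>2
      \<le> (dist (Z, W) p)\<^sup>2 - ((1 - rhobar) * min lam (1 / lam) / 2)\<^sup>2 * G"
proof -
  obtain zs ws where p: "p = (zs, ws)" by (cases p)
  define V where "V = B - d"
  have UV: "U + B - d = U + V" unfolding V_def by (simp add: algebra_simps)
  have G: "G = (norm (U + V))\<^sup>2 + lam\<^sup>2 * (norm (W - U))\<^sup>2"
    unfolding G_def UV by (simp add: norm_minus_commute)
  have "norm (U + B - d) \<noteq> 0 \<or> norm (U - W) \<noteq> 0" using no_stop by auto
  then have "0 < G" unfolding G_def using lam by (auto simp: add_pos_nonneg add_nonneg_pos)
  have "B - d + W = V + W" and "d - B - U = - (U + V)" unfolding V_def by (simp_all add: algebra_simps)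
  then have gam_eq: "gam = lam * ((norm (V + W))\<^sup>2 - (U + V) \<bullet> (W - U)) / G"
    unfolding gam by (simp only: inner_minus_left right_diff_distrib) simp
  then have gam_G: "gam * G = lam * ((norm (V + W))\<^sup>2 - (U + V) \<bullet> (W - U))"
    using \<open>0 < G\<close> by simp
  have tau_le: "min lam (1 / lam) / 2 \<le> gam"
    unfolding gam_eq G by (rule pmm_stepsize_ge[OF lam \<open>0 < G\<close>[unfolded G]])
  have tau_nonneg: "0 \<le> min lam (1 / lam) / 2" using lam by simp
  then have "0 \<le> gam" using tau_le by (rule order_trans)
  have mono: "0 \<le> (U - ws) \<bullet> (zs - (Z + lam *\<^sub>R W + lam *\<^sub>R V - lam *\<^sub>R (W - U)))
        + (ws + V) \<bullet> (zs - (Z + lam *\<^sub>R W + lam *\<^sub>R V))"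
    using Se_subdiff_monotone[OF solution[unfolded p] sub1 sub2] unfolding X_def V_def
    by (simp add: algebra_simps)
  have "0 \<le> rho" using rho rhobar by linarith
  have relax: "(1 - rhobar)\<^sup>2 \<le> rho * (2 - rho)"
    using relaxation_factor_ge[OF rhobar(1) less_imp_le[OF rhobar(2)] rho] .
  have "(1 - rhobar)\<^sup>2 * (min lam (1 / lam) / 2)\<^sup>2 * G \<le> rho * (2 - rho) * gam\<^sup>2 * G"
    using relax power_mono[OF tau_le tau_nonneg, of 2] order_trans[OF zero_le_power2 relax] \<open>0 < G\<close>
    by (intro mult_right_mono mult_mono) auto
  then have decrease: "((1 - rhobar) * min lam (1 / lam) / 2)\<^sup>2 * G \<le> rho * (2 - rho) * gam\<^sup>2 * G"
    by (simp only: power_mult_distrib power_divide times_divide_eq_right mult_ac)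
  have sq_dist: "(dist (a, b) (a', b'))\<^sup>2 = (norm (a - a'))\<^sup>2 + (norm (b - b'))\<^sup>2" for a b a' b' :: 'c
    by (simp add: dist_norm norm_Pair)
  have "(dist (Z + (rho * gam) *\<^sub>R (U + B - d), W - (rho * gam * lam) *\<^sub>R (W - U)) p)\<^sup>2
      = (norm (Z + (rho * gam) *\<^sub>R (U + V) - zs))\<^sup>2 + (norm (W - (rho * gam * lam) *\<^sub>R (W - U) - ws))\<^sup>2"
    unfolding p sq_dist UV ..
  also have "\<dots> \<le> (norm (Z - zs))\<^sup>2 + (norm (W - ws))\<^sup>2 - rho * (2 - rho) * gam\<^sup>2 * G"
    using pmm_descent[OF \<open>0 \<le> rho\<close> \<open>0 \<le> gam\<close> gam_G[unfolded G] mono] unfolding G .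
  also have "\<dots> \<le> (dist (Z, W) p)\<^sup>2 - ((1 - rhobar) * min lam (1 / lam) / 2)\<^sup>2 * G"
    unfolding p sq_dist by (rule diff_left_mono[OF decrease])
  finally show ?thesis .
qed

lemma sum_le_of_telescoping:
  fixes E D :: "nat \<Rightarrow> real"
  assumes "\<And>j. 1 \<le> j \<Longrightarrow> j \<le> k \<Longrightarrow> E j \<le> E (j - 1) - D j"
  shows "(\<Sum>j = 1..k. D j) \<le> E 0 - E k"
  using assms
proof (induction k)
  case (Suc k)
  then have "(\<Sum>j = 1..k. D j) \<le> E 0 - E k" by simp
  then show ?case using Suc.prems[of "Suc k"] by simp
qed simp

lemma fejer_sqrt_rate:
  fixes q :: "nat \<Rightarrow> 'm::metric_space" and G :: "nat \<Rightarrow> real"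
  assumes S: "S \<noteq> {}" and c: "0 < c" and k: "1 \<le> k"
    and descent: "\<And>j p. 1 \<le> j \<Longrightarrow> p \<in> S \<Longrightarrow> (dist (q j) p)\<^sup>2 \<le> (dist (q (j - 1)) p)\<^sup>2 - c\<^sup>2 * G j"
  shows "\<exists>i\<in>{1..k}. sqrt (G i) \<le> infdist (q 0) S / (c * sqrt (real k))"
proof -
  have "Min (G ` {1..k}) \<in> G ` {1..k}" using k by (intro Min_in) auto
  then obtain i where i: "i \<in> {1..k}" and "G i = Min (G ` {1..k})" by auto
  then have i_min: "G i \<le> G j" if "j \<in> {1..k}" for j
    using that by simp
  have "c * sqrt (real k) * sqrt (G i) \<le> dist (q 0) p" if p: "p \<in> S" for p
  proof -
    have "(\<Sum>j = 1..k. c\<^sup>2 * G j) \<le> (dist (q 0) p)\<^sup>2 - (dist (q k) p)\<^sup>2"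
      by (rule sum_le_of_telescoping) (use descent p in auto)
    moreover have "c\<^sup>2 * G i \<le> c\<^sup>2 * G j" if "j \<in> {1..k}" for j
      using i_min[OF that] by (simp add: mult_left_mono)
    then have "real k * (c\<^sup>2 * G i) \<le> (\<Sum>j = 1..k. c\<^sup>2 * G j)"
      using sum_bounded_below[of "{1..k}" "c\<^sup>2 * G i" "\<lambda>j. c\<^sup>2 * G j"] by simp
    moreover have "0 \<le> (dist (q k) p)\<^sup>2" by simp
    ultimately have "c\<^sup>2 * real k * G i \<le> (dist (q 0) p)\<^sup>2"
      by (simp only: mult_ac)
    then have "sqrt (c\<^sup>2 * real k * G i) \<le> dist (q 0) p"
      using real_sqrt_le_mono by fastforce
    then show ?thesis using c by (simp add: real_sqrt_mult)
  qed
  then have "c * sqrt (real k) * sqrt (G i) \<le> infdist (q 0) S"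
    unfolding infdist_notempty[OF S] by (intro cINF_greatest S)
  then have "sqrt (G i) \<le> infdist (q 0) S / (c * sqrt (real k))"
    using c k by (simp add: le_divide_eq mult_ac)
  then show ?thesis using i by blast
qed

theorem mainTheorem5:
  fixes f :: "'a::euclidean_space \<Rightarrow> ereal" and g :: "'b::euclidean_space \<Rightarrow> ereal"
    and M :: "'a \<Rightarrow> 'c::euclidean_space" and C :: "'b \<Rightarrow> 'c" and d :: 'c
    and lam rhobar :: real
    and u :: "nat \<Rightarrow> 'a" and v :: "nat \<Rightarrow> 'b" and z w :: "nat \<Rightarrow> 'c"
    and gam rho :: "nat \<Rightarrow> real"
  assumes f_pcc: "proper_closed_convex f" and g_pcc: "proper_closed_convex g"
    and M_lin: "linear M" and C_lin: "linear C"
    and A1: "\<exists>u' v' z'. saddle_point f g M C d u' v' z'"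
    and A2: "rel_interior (effdom (fconj f)) \<inter> range (adjoint M) \<noteq> {}"
    and A3: "rel_interior (effdom (fconj g)) \<inter> range (adjoint C) \<noteq> {}"
    and lam_pos: "lam > 0" and rhobar: "0 \<le> rhobar" "rhobar < 1"
    and v_min: "\<And>k v'. k \<ge> 1 \<Longrightarrow>
        g (v k) + ereal ((z (k-1) + lam *\<^sub>R w (k-1)) \<bullet> (C (v k) - d) + lam / 2 * (norm (C (v k) - d))\<^sup>2)
        \<le> g v' + ereal ((z (k-1) + lam *\<^sub>R w (k-1)) \<bullet> (C v' - d) + lam / 2 * (norm (C v' - d))\<^sup>2)"
    and u_min: "\<And>k u'. k \<ge> 1 \<Longrightarrow>
        f (u k) + ereal ((z (k-1) + lam *\<^sub>R (C (v k) - d)) \<bullet> M (u k) + lam / 2 * (norm (M (u k)))\<^sup>2)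
        \<le> f u' + ereal ((z (k-1) + lam *\<^sub>R (C (v k) - d)) \<bullet> M u' + lam / 2 * (norm (M u'))\<^sup>2)"
    and no_stop: "\<And>k. k \<ge> 1 \<Longrightarrow> norm (M (u k) + C (v k) - d) + norm (M (u k) - w (k-1)) \<noteq> 0"
    and gam_def: "\<And>k. k \<ge> 1 \<Longrightarrow> gam k =
        (lam * (norm (C (v k) - d + w (k-1)))\<^sup>2
           + lam * ((d - C (v k) - M (u k)) \<bullet> (w (k-1) - M (u k))))
        / ((norm (M (u k) + C (v k) - d))\<^sup>2 + lam\<^sup>2 * (norm (M (u k) - w (k-1)))\<^sup>2)"
    and rho_range: "\<And>k. k \<ge> 1 \<Longrightarrow> 1 - rhobar \<le> rho k \<and> rho k \<le> 1 + rhobar"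
    and z_upd: "\<And>k. k \<ge> 1 \<Longrightarrow> z k = z (k-1) + (rho k * gam k) *\<^sub>R (M (u k) + C (v k) - d)"
    and w_upd: "\<And>k. k \<ge> 1 \<Longrightarrow> w k = w (k-1) - (rho k * gam k * lam) *\<^sub>R (w (k-1) - M (u k))"
  defines "x \<equiv> (\<lambda>k. z (k-1) + lam *\<^sub>R w (k-1) + lam *\<^sub>R (C (v k) - d))"
    and "y \<equiv> (\<lambda>k. z (k-1) + lam *\<^sub>R w (k-1) + lam *\<^sub>R (C (v k) - d) - lam *\<^sub>R (w (k-1) - M (u k)))"
    and "d0 \<equiv> infdist (z 0, w 0) (Se (h1fun f M) (h2fun g C d))"
    and "tau \<equiv> min lam (1 / lam)"
  shows "\<forall>k\<ge>1.
      0 \<in> {s + adjoint C (x k) | s. s \<in> subdiff g (v k)}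
    \<and> 0 \<in> {s + adjoint M (y k) | s. s \<in> subdiff f (u k)}
    \<and> (\<exists>i\<in>{1..k}.
          norm (M (u i) + C (v i) - d) \<le> 2 * d0 / ((1 - rhobar) * tau * sqrt (real k))
        \<and> norm (x i - y i) \<le> 2 * d0 / ((1 - rhobar) * tau * sqrt (real k)))"
proof -
  have pf: "proper_fun f" and cf: "convex_fun f" and pg: "proper_fun g" and cg: "convex_fun g"
    using f_pcc g_pcc unfolding proper_closed_convex_def by auto
  define S where "S = Se (h1fun f M) (h2fun g C d)"
  define G where "G j = (norm (M (u j) + C (v j) - d))\<^sup>2 + lam\<^sup>2 * (norm (M (u j) - w (j - 1)))\<^sup>2" for j
  from A1 have "S \<noteq> {}"
    using saddle_point_in_Se[OF pf pg M_lin C_lin] unfolding S_def by blast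
  have sub_g: "- adjoint C (x k) \<in> subdiff g (v k)" if "1 \<le> k" for k
    unfolding x_def by (rule subdiff_at_argmin_augmented[OF pg cg C_lin v_min[OF that]])
  have sub_f: "- adjoint M (y k) \<in> subdiff f (u k)" if "1 \<le> k" for k
    using subdiff_at_argmin_augmented[OF pf cf M_lin, of "u k" "z (k - 1) + lam *\<^sub>R (C (v k) - d)" 0 lam]
      u_min[OF that] unfolding y_def by (simp add: algebra_simps)
  have descent: "(dist (z k, w k) p)\<^sup>2 \<le> (dist (z (k - 1), w (k - 1)) p)\<^sup>2 - ((1 - rhobar) * tau / 2)\<^sup>2 * G k"
    if k: "1 \<le> k" and p: "p \<in> S" for k p
    using pmm_step_fejer[OF lam_pos rhobar rho_range[OF k] p[unfolded S_def]
        subdiff_h1fun[OF M_lin sub_f[OF k, unfolded y_def]] subdiff_h2fun[OF C_lin sub_g[OF k, unfolded x_def]]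
        no_stop[OF k] gam_def[OF k]]
    unfolding z_upd[OF k, symmetric] w_upd[OF k, symmetric] G_def tau_def .
  have c: "0 < (1 - rhobar) * tau / 2" unfolding tau_def using lam_pos rhobar by simp
  show ?thesis
  proof (intro allI impI conjI)
    fix k :: nat assume k: "1 \<le> k"
    show "0 \<in> {s + adjoint C (x k) | s. s \<in> subdiff g (v k)}" using sub_g[OF k] by force
    show "0 \<in> {s + adjoint M (y k) | s. s \<in> subdiff f (u k)}" using sub_f[OF k] by force
    obtain i where i: "i \<in> {1..k}" and Gi: "sqrt (G i) \<le> d0 / ((1 - rhobar) * tau / 2 * sqrt (real k))"
      using fejer_sqrt_rate[OF \<open>S \<noteq> {}\<close> c k, of "\<lambda>j. (z j, w j)" G] descent
      unfolding d0_def S_def by auto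
    have "d0 / ((1 - rhobar) * tau / 2 * sqrt (real k)) = 2 * d0 / ((1 - rhobar) * tau * sqrt (real k))"
      by simp
    with Gi have bound: "sqrt (G i) \<le> 2 * d0 / ((1 - rhobar) * tau * sqrt (real k))" by (simp only:)
    have "norm (M (u i) + C (v i) - d) \<le> sqrt (G i)"
      unfolding G_def by (intro real_le_rsqrt) simp
    moreover have "x i - y i = lam *\<^sub>R (w (i - 1) - M (u i))" unfolding x_def y_def by simp
    then have "norm (x i - y i) \<le> sqrt (G i)"
      unfolding G_def using lam_pos by (intro real_le_rsqrt) (simp add: power_mult_distrib norm_minus_commute)
    ultimately show "\<exists>i\<in>{1..k}.
          norm (M (u i) + C (v i) - d) \<le> 2 * d0 / ((1 - rhobar) * tau * sqrt (real k))
        \<and> norm (x i - y i) \<le> 2 * d0 / ((1 - rhobar) * tau * sqrt (real k))"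
      using i bound by force
  qed
qed

end
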